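(* Let $\mathcal{C}$ and $\mathcal{E}$ be finite sets and $T_1,\dots,T_\ell$ be $|\mathcal{C}|\times|\mathcal{E}|$ matrices. Let $\{A_0=I,A_1,\dots,A_d\}$ be the basis of $\{0,1\}$-matrices of a commutative association scheme on $\mathcal{E}$, with primitive idempotents $E_0,\dots,E_d$ and eigenvalues $p_k(r)$ defined by $A_kE_r=p_k(r)E_r$, and suppose $T_i^\top T_j=\sum_{k=0}^d t_{ij}^kA_k$ for complex numbers $t_{ij}^k$ ($i,j\in[\ell]$). For $j\in[m]$ let $F_j=\sum_{i=1}^\ell f_{ij}T_i$ with $f_{ij}\in\mathbb{C}$, fix $s\in\{0,\dots,d\}$ and let $g:[m]\to[\ell]$. Then the following are equivalent: (i) for every $j\in[m]$ there is a non-zero constant $\alpha_j$ with $T_{g(j)}^\top F_j=\alpha_jE_s$, and $T_h^\top F_j=0$ for all $h<g(j)$; (ii) for every $j\in[m]$: $\sum_{i=1}^\ell f_{ij}t^k_{hi}=0$ for all $k\in\{0,\dots,d\}$ and all $h<g(j)$, and $\sum_{i=1}^\ell\sum_{k=0}^d f_{ij}t^k_{g(j),i}p_k(r)$ is non-zero for $r=s$ and zero for all $r\neq s$.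
   Context: $[m]=\{1,\dots,m\}$. Condition (i) is called the triangular criterion for $g$. *)

theory Defs
  imports "HOL-Analysis.Analysis"
begin

text \<open>Matrices indexed by finite types: a |C| x |E| matrix is an element of
  complex^'e^'c (rows indexed by 'c, columns by 'e).\<close>

definition msc :: "complex \<Rightarrow> complex^'n^'m \<Rightarrow> complex^'n^'m" where
  "msc c M = (\<chi> i j. c * M $ i $ j)"

definition comm_assoc_scheme :: "nat \<Rightarrow> (nat \<Rightarrow> complex^'e^'e) \<Rightarrow> bool" where
  "comm_assoc_scheme d A \<longleftrightarrow>
     A 0 = mat 1 \<and>
     (\<forall>k\<le>d. \<forall>x y. A k $ x $ y = 0 \<or> A k $ x $ y = 1) \<and>
     (\<forall>k\<le>d. A k \<noteq> 0) \<and>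
     (\<forall>x y. (\<Sum>k\<le>d. A k $ x $ y) = 1) \<and>
     (\<forall>k\<le>d. \<exists>k'\<le>d. transpose (A k) = A k') \<and>
     (\<forall>i\<le>d. \<forall>j\<le>d. \<exists>c. A i ** A j = (\<Sum>k\<le>d. msc (c k) (A k))) \<and>
     (\<forall>i\<le>d. \<forall>j\<le>d. A i ** A j = A j ** A i)"

definition bm_algebra :: "nat \<Rightarrow> (nat \<Rightarrow> complex^'e^'e) \<Rightarrow> (complex^'e^'e) set" where
  "bm_algebra d A = {M. \<exists>c. M = (\<Sum>k\<le>d. msc (c k) (A k))}"

definition idempotent_in :: "nat \<Rightarrow> (nat \<Rightarrow> complex^'e^'e) \<Rightarrow> complex^'e^'e \<Rightarrow> bool" where
  "idempotent_in d A M \<longleftrightarrow> M \<in> bm_algebra d A \<and> M ** M = M"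

definition primitive_idempotent :: "nat \<Rightarrow> (nat \<Rightarrow> complex^'e^'e) \<Rightarrow> complex^'e^'e \<Rightarrow> bool" where
  "primitive_idempotent d A M \<longleftrightarrow>
     idempotent_in d A M \<and> M \<noteq> 0 \<and>
     \<not> (\<exists>P Q. idempotent_in d A P \<and> idempotent_in d A Q \<and> P \<noteq> 0 \<and> Q \<noteq> 0 \<and>
             P ** Q = 0 \<and> M = P + Q)"

definition primitive_idempotents :: "nat \<Rightarrow> (nat \<Rightarrow> complex^'e^'e) \<Rightarrow> (nat \<Rightarrow> complex^'e^'e) \<Rightarrow> bool" where
  "primitive_idempotents d A E \<longleftrightarrow>
     (\<forall>r\<le>d. primitive_idempotent d A (E r)) \<and>
     inj_on E {..d} \<and>
     (\<forall>M. primitive_idempotent d A M \<longrightarrow> (\<exists>r\<le>d. M = E r))"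

end

theory Submission
  imports Defs
begin

(* Expanding F j, the product (T h)^T F j is the element sum_k (sum_i f i j * t h i k) A k of the
   Bose-Mesner algebra.  Since the A k have disjoint non-empty supports, it vanishes iff all its
   coefficients do, which gives the conditions for h < g j.
   Since A k E r = p k r E r and the primitive idempotents are pairwise orthogonal and sum to the
   identity, sum_k c k A k = sum_r lambda r E r with lambda r = sum_k c k * p k r; so it is a
   non-zero multiple of E s iff lambda s is the only non-zero lambda r.  Orthogonality and
   completeness of the E r come from primitivity in the commutative algebra: for P primitive and
   X idempotent, P X is an idempotent below P, hence 0 or P; and every non-zero idempotent lies
   above a primitive one, by descent on the rank. *)

lemma msc_nth [simp]: "msc c M $ i $ j = c * M $ i $ j"
  by (simp add: msc_def)

lemma msc_0_left [simp]: "msc 0 M = 0"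
  by (simp add: vec_eq_iff)

lemma msc_0_right [simp]: "msc c 0 = 0"
  by (simp add: vec_eq_iff)

lemma msc_msc [simp]: "msc a (msc b M) = msc (a * b) M"
  by (simp add: vec_eq_iff mult.assoc)

lemma msc_cancel: "M \<noteq> 0 \<Longrightarrow> msc a M = msc b M \<longleftrightarrow> a = b"
  by (auto simp: vec_eq_iff)

lemma msc_sum_right: "msc c (\<Sum>k\<in>S. M k) = (\<Sum>k\<in>S. msc c (M k))"
  by (simp add: vec_eq_iff sum_distrib_left)

lemma msc_sum_left: "(\<Sum>k\<in>S. msc (c k) M) = msc (\<Sum>k\<in>S. c k) M"
  by (simp add: vec_eq_iff sum_distrib_right)

lemma matrix_diff_ldistrib: "A ** (B - C) = A ** B - A ** (C :: 'a::ring_1^_^_)"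
  by (simp add: matrix_matrix_mult_def vec_eq_iff right_diff_distrib sum_subtractf)

lemma matrix_diff_rdistrib: "(A - B) ** C = A ** C - B ** (C :: 'a::ring_1^_^_)"
  by (simp add: matrix_matrix_mult_def vec_eq_iff left_diff_distrib sum_subtractf)

lemma matrix_sum_ldistrib: "(A :: 'a::semiring_1^_^_) ** (\<Sum>k\<in>S. B k) = (\<Sum>k\<in>S. A ** B k)"
  using sum.swap by (force simp: matrix_matrix_mult_def vec_eq_iff sum_distrib_left)

lemma matrix_sum_rdistrib: "(\<Sum>k\<in>S. A k) ** (B :: 'a::semiring_1^_^_) = (\<Sum>k\<in>S. A k ** B)"
  using sum.swap by (force simp: matrix_matrix_mult_def vec_eq_iff sum_distrib_right)

lemma msc_matrix_mult: "msc c A ** B = msc c (A ** B)"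
  by (simp add: matrix_matrix_mult_def vec_eq_iff sum_distrib_left mult.assoc)

lemma matrix_mult_msc: "A ** msc c B = msc c (A ** B)"
  by (simp add: matrix_matrix_mult_def vec_eq_iff sum_distrib_left mult_ac)

lemma sum_msc_mult_sum_msc:
  "(\<Sum>i\<in>I. msc (a i) (P i)) ** (\<Sum>j\<in>J. msc (b j) (Q j))
     = (\<Sum>i\<in>I. \<Sum>j\<in>J. msc (a i * b j) (P i ** Q j))"
  by (subst sum.swap)
    (simp add: matrix_sum_ldistrib matrix_sum_rdistrib msc_matrix_mult matrix_mult_msc
      msc_sum_right mult.commute)

lemma matrix_mult_sum_msc_in_basis:
  assumes "\<And>i. i \<in> I \<Longrightarrow> X ** Y i = (\<Sum>k\<in>K. msc (t i k) (B k))"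
  shows "X ** (\<Sum>i\<in>I. msc (f i) (Y i)) = (\<Sum>k\<in>K. msc (\<Sum>i\<in>I. f i * t i k) (B k))"
proof -
  have "X ** (\<Sum>i\<in>I. msc (f i) (Y i)) = (\<Sum>i\<in>I. \<Sum>k\<in>K. msc (f i * t i k) (B k))"
    using assms by (simp add: matrix_sum_ldistrib matrix_mult_msc msc_sum_right)
  also have "\<dots> = (\<Sum>k\<in>K. msc (\<Sum>i\<in>I. f i * t i k) (B k))"
    by (subst sum.swap) (simp add: msc_sum_left)
  finally show ?thesis .
qed

lemma dim_range_less_if_absorbed:
  fixes P Q :: "complex^'n^'n"
  assumes "P ** P = P" "P ** Q = P" "Q ** P = P" "P \<noteq> Q"
  shows "dim (range ((*v) P)) < dim (range ((*v) Q))"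
proof -
  have "range ((*v) P) \<subseteq> range ((*v) Q)"
    using assms(3) by (metis image_subsetI matrix_vector_mul_assoc rangeI)
  moreover have "range ((*v) P) \<noteq> range ((*v) Q)"
  proof
    assume same_range: "range ((*v) P) = range ((*v) Q)"
    have "(P ** Q) *v x = Q *v x" for x
    proof -
      obtain y where y: "Q *v x = P *v y"
        using same_range by (metis rangeE rangeI)
      show ?thesis
        by (simp add: matrix_vector_mul_assoc[symmetric] y)
          (simp add: matrix_vector_mul_assoc assms(1))
    qed
    then show False
      using assms(2,4) by (simp add: matrix_eq)
  qed
  ultimately have "span (range ((*v) P)) \<subset> span (range ((*v) Q))"
    by (metis linear_subspace_image matrix_vector_mul_linear psubsetI span_eq_iff subspace_UNIV)
  then show ?thesis
    by (rule dim_psubset)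
qed

lemma bm_algebra_basis: "k \<le> d \<Longrightarrow> A k \<in> bm_algebra d A"
  unfolding bm_algebra_def
  by (intro CollectI exI[of _ "\<lambda>j. of_bool (j = k)"]) (simp add: vec_eq_iff if_distrib)

lemma bm_algebra_zero: "0 \<in> bm_algebra d A"
  unfolding bm_algebra_def by (intro CollectI exI[of _ "\<lambda>_. 0"]) simp

lemma bm_algebra_add:
  assumes "M \<in> bm_algebra d A" "N \<in> bm_algebra d A"
  shows "M + N \<in> bm_algebra d A"
proof -
  obtain a b where "M = (\<Sum>k\<le>d. msc (a k) (A k))" "N = (\<Sum>k\<le>d. msc (b k) (A k))"
    using assms by (auto simp: bm_algebra_def)
  then have "M + N = (\<Sum>k\<le>d. msc (a k + b k) (A k))"
    by (simp add: vec_eq_iff distrib_right sum.distrib)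
  then show ?thesis
    unfolding bm_algebra_def by (intro CollectI exI)
qed

lemma bm_algebra_msc:
  assumes "M \<in> bm_algebra d A"
  shows "msc c M \<in> bm_algebra d A"
proof -
  obtain a where "M = (\<Sum>k\<le>d. msc (a k) (A k))"
    using assms by (auto simp: bm_algebra_def)
  then have "msc c M = (\<Sum>k\<le>d. msc (c * a k) (A k))"
    by (simp add: msc_sum_right)
  then show ?thesis
    unfolding bm_algebra_def by (intro CollectI exI)
qed

lemma bm_algebra_diff:
  assumes "M \<in> bm_algebra d A" "N \<in> bm_algebra d A"
  shows "M - N \<in> bm_algebra d A"
proof -
  have "M - N = M + msc (-1) N"
    by (simp add: vec_eq_iff)
  then show ?thesis
    using assms by (metis bm_algebra_add bm_algebra_msc)
qed

lemma bm_algebra_sum: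
  "(\<And>i. i \<in> S \<Longrightarrow> M i \<in> bm_algebra d A) \<Longrightarrow> (\<Sum>i\<in>S. M i) \<in> bm_algebra d A"
  by (induction S rule: infinite_finite_induct) (auto simp: bm_algebra_zero bm_algebra_add)

context
  fixes d :: nat and A :: "nat \<Rightarrow> complex^'e::finite^'e"
  assumes scheme: "comm_assoc_scheme d A"
begin

lemma bm_algebra_one: "mat 1 \<in> bm_algebra d A"
  using scheme bm_algebra_basis[of 0 d A] by (simp add: comm_assoc_scheme_def)

lemma bm_algebra_mult:
  assumes "M \<in> bm_algebra d A" "N \<in> bm_algebra d A"
  shows "M ** N \<in> bm_algebra d A"
proof -
  obtain a b where M: "M = (\<Sum>k\<le>d. msc (a k) (A k))" and N: "N = (\<Sum>k\<le>d. msc (b k) (A k))"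
    using assms by (auto simp: bm_algebra_def)
  have "A i ** A j \<in> bm_algebra d A" if "i \<le> d" "j \<le> d" for i j
    using scheme that unfolding comm_assoc_scheme_def bm_algebra_def by blast
  then show ?thesis
    unfolding M N sum_msc_mult_sum_msc by (auto intro!: bm_algebra_sum bm_algebra_msc)
qed

lemma bm_algebra_commute:
  assumes "M \<in> bm_algebra d A" "N \<in> bm_algebra d A"
  shows "M ** N = N ** M"
proof -
  obtain a b where M: "M = (\<Sum>k\<le>d. msc (a k) (A k))" and N: "N = (\<Sum>k\<le>d. msc (b k) (A k))"
    using assms by (auto simp: bm_algebra_def)
  have "A i ** A j = A j ** A i" if "i \<le> d" "j \<le> d" for i j
    using scheme that unfolding comm_assoc_scheme_def by blast
  then show ?thesis
    unfolding M N sum_msc_mult_sum_msc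
    by (subst sum.swap) (simp add: mult.commute)
qed

lemma scheme_unique_class:
  assumes "k \<le> d" "j \<le> d" "A k $ x $ y = 1"
  shows "A j $ x $ y = of_bool (j = k)"
proof -
  have entries_01: "A i $ x $ y = of_bool (A i $ x $ y = 1)" if "i \<le> d" for i
  proof -
    have "A i $ x $ y = 0 \<or> A i $ x $ y = 1"
      using scheme that unfolding comm_assoc_scheme_def by blast
    then show ?thesis
      by auto
  qed
  have "1 = (\<Sum>i\<le>d. A i $ x $ y)"
    using scheme unfolding comm_assoc_scheme_def by metis
  also have "\<dots> = (\<Sum>i\<le>d. of_bool (A i $ x $ y = 1))"
    using entries_01 by (intro sum.cong) auto
  also have "\<dots> = of_nat (card ({..d} \<inter> {i. A i $ x $ y = 1}))"
    by simp
  finally have "card ({..d} \<inter> {i. A i $ x $ y = 1}) = 1"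
    by (metis of_nat_eq_1_iff)
  moreover have "k \<in> {..d} \<inter> {i. A i $ x $ y = 1}"
    using assms(1,3) by simp
  ultimately have classes: "{..d} \<inter> {i. A i $ x $ y = 1} = {k}"
    by (metis card_1_singletonE singletonD)
  show ?thesis
  proof (cases "j = k")
    case False
    then have "A j $ x $ y \<noteq> 1"
      using classes assms(2) by blast
    then show ?thesis
      using entries_01[OF assms(2)] False by (metis of_bool_eq(1))
  qed (simp add: assms(3))
qed

lemma bm_combination_nth:
  assumes "k \<le> d" "A k $ x $ y = 1"
  shows "(\<Sum>j\<le>d. msc (c j) (A j)) $ x $ y = c k"
  using assms by (simp add: scheme_unique_class)

lemma bm_combination_eq_0_iff: "(\<Sum>k\<le>d. msc (c k) (A k)) = 0 \<longleftrightarrow> (\<forall>k\<le>d. c k = 0)"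
proof (intro iffI allI impI)
  fix k
  assume zero: "(\<Sum>k\<le>d. msc (c k) (A k)) = 0" and k: "k \<le> d"
  have "A k \<noteq> 0"
    using scheme k unfolding comm_assoc_scheme_def by blast
  then obtain x y where "A k $ x $ y \<noteq> 0"
    by (metis vec_eq_iff zero_index)
  then have "A k $ x $ y = 1"
    using scheme k unfolding comm_assoc_scheme_def by blast
  then show "c k = 0"
    using bm_combination_nth[OF k, of x y c] zero by simp
qed simp

lemma primitive_idempotent_mult_idempotent:
  assumes P: "primitive_idempotent d A P" and X: "idempotent_in d A X"
  shows "P ** X = 0 \<or> P ** X = P"
proof -
  define Y where "Y = P ** X"
  have P_alg: "P \<in> bm_algebra d A" and P_idem: "P ** P = P"
    and X_alg: "X \<in> bm_algebra d A" and X_idem: "X ** X = X"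
    using P X by (auto simp: primitive_idempotent_def idempotent_in_def)
  have Y_alg: "Y \<in> bm_algebra d A"
    using P_alg X_alg by (simp add: Y_def bm_algebra_mult)
  have PY: "P ** Y = Y"
    by (simp add: Y_def matrix_mul_assoc P_idem)
  have YP: "Y ** P = Y"
    using bm_algebra_commute[OF Y_alg P_alg] PY by simp
  have YY: "Y ** Y = Y"
    by (metis Y_def YP X_idem matrix_mul_assoc)
  have "idempotent_in d A Y" "idempotent_in d A (P - Y)"
    using Y_alg P_alg P_idem YY PY YP
    by (auto simp: idempotent_in_def bm_algebra_diff matrix_diff_ldistrib matrix_diff_rdistrib)
  moreover have "Y ** (P - Y) = 0" "P = Y + (P - Y)"
    by (simp_all add: matrix_diff_ldistrib YP YY)
  ultimately have "Y = 0 \<or> P - Y = 0"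
    using P unfolding primitive_idempotent_def by blast
  then show ?thesis
    unfolding Y_def by auto
qed

lemma idempotent_dominates_primitive:
  assumes "idempotent_in d A Q" "Q \<noteq> 0"
  shows "\<exists>P. primitive_idempotent d A P \<and> P ** Q = P"
  using assms
proof (induction "dim (range ((*v) Q))" arbitrary: Q rule: less_induct)
  case less
  show ?case
  proof (cases "primitive_idempotent d A Q")
    case True
    then show ?thesis
      unfolding primitive_idempotent_def idempotent_in_def by blast
  next
    case False
    then obtain P1 P2 where P1: "idempotent_in d A P1" "P1 \<noteq> 0" and P2: "P2 \<noteq> 0"
      and orth: "P1 ** P2 = 0" and Q: "Q = P1 + P2"
      using less.prems unfolding primitive_idempotent_def by blast
    have P1Q: "P1 ** Q = P1"
      using P1 orth by (simp add: Q matrix_add_ldistrib idempotent_in_def)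
    moreover have "Q ** P1 = P1"
      using bm_algebra_commute P1Q P1 less.prems by (metis idempotent_in_def)
    moreover have "P1 \<noteq> Q"
      using P2 Q by auto
    ultimately have "dim (range ((*v) P1)) < dim (range ((*v) Q))"
      using P1 by (intro dim_range_less_if_absorbed) (simp_all add: idempotent_in_def)
    then obtain P where "primitive_idempotent d A P" "P ** P1 = P"
      using less.hyps P1 by blast
    then show ?thesis
      by (metis P1Q matrix_mul_assoc)
  qed
qed

context
  fixes E :: "nat \<Rightarrow> complex^'e^'e"
  assumes idem: "primitive_idempotents d A E"
begin

lemma primitive_idempotents_nonzero: "r \<le> d \<Longrightarrow> E r \<noteq> 0"
  using idem by (simp add: primitive_idempotents_def primitive_idempotent_def)

lemma primitive_idempotents_mult:
  assumes "r \<le> d" "r' \<le> d"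
  shows "E r ** E r' = (if r = r' then E r else 0)"
proof -
  have prim: "primitive_idempotent d A (E i)" if "i \<le> d" for i
    using idem that by (simp add: primitive_idempotents_def)
  then have idem_in: "idempotent_in d A (E i)" if "i \<le> d" for i
    using that by (simp add: primitive_idempotent_def)
  have "E r ** E r' = 0" if "r \<noteq> r'"
  proof -
    have "E r \<noteq> E r'"
      using idem assms that by (auto simp: primitive_idempotents_def inj_on_def)
    moreover have "E r ** E r' = E r' ** E r"
      using assms idem_in by (simp add: idempotent_in_def bm_algebra_commute)
    ultimately show ?thesis
      using primitive_idempotent_mult_idempotent[OF prim idem_in] assms by metis
  qed
  then show ?thesis
    using idem_in[OF assms(1)] by (auto simp: idempotent_in_def)
qed

lemma primitive_idempotents_sum: "(\<Sum>r\<le>d. E r) = mat 1"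
proof -
  define Q where "Q = mat 1 - (\<Sum>r\<le>d. E r)"
  have E_Q: "E r ** Q = 0" if "r \<le> d" for r
  proof -
    have "E r ** (\<Sum>r'\<le>d. E r') = (\<Sum>r'\<le>d. if r = r' then E r else 0)"
      using that by (simp add: matrix_sum_ldistrib primitive_idempotents_mult)
    also have "\<dots> = E r"
      using that by simp
    finally show ?thesis
      by (simp add: Q_def matrix_diff_ldistrib)
  qed
  have "Q ** Q = mat 1 ** Q - (\<Sum>r\<le>d. E r ** Q)"
    by (simp only: Q_def matrix_diff_rdistrib matrix_sum_rdistrib)
  then have "Q ** Q = Q"
    by (simp add: E_Q)
  moreover have "Q \<in> bm_algebra d A"
    using idem unfolding Q_def primitive_idempotents_def primitive_idempotent_def idempotent_in_def
    by (intro bm_algebra_diff bm_algebra_one bm_algebra_sum) blast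
  ultimately have "idempotent_in d A Q"
    by (simp add: idempotent_in_def)
  have "Q = 0"
  proof (rule ccontr)
    assume "Q \<noteq> 0"
    then obtain P where "primitive_idempotent d A P" "P ** Q = P"
      using idempotent_dominates_primitive \<open>idempotent_in d A Q\<close> by blast
    moreover obtain r where "r \<le> d" "P = E r"
      using idem \<open>primitive_idempotent d A P\<close> unfolding primitive_idempotents_def by blast
    ultimately show False
      using E_Q primitive_idempotents_nonzero by auto
  qed
  then show ?thesis
    by (simp add: Q_def)
qed

context
  fixes p :: "nat \<Rightarrow> nat \<Rightarrow> complex"
  assumes eig: "\<And>k r. k \<le> d \<Longrightarrow> r \<le> d \<Longrightarrow> A k ** E r = msc (p k r) (E r)"
begin

lemma bm_combination_mult_primitive:
  "r \<le> d \<Longrightarrow> (\<Sum>k\<le>d. msc (c k) (A k)) ** E r = msc (\<Sum>k\<le>d. c k * p k r) (E r)"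
  by (simp add: matrix_sum_rdistrib msc_matrix_mult eig msc_sum_left)

lemma bm_combination_spectral_decomposition:
  "(\<Sum>k\<le>d. msc (c k) (A k)) = (\<Sum>r\<le>d. msc (\<Sum>k\<le>d. c k * p k r) (E r))"
proof -
  have "(\<Sum>k\<le>d. msc (c k) (A k)) = (\<Sum>k\<le>d. msc (c k) (A k)) ** (\<Sum>r\<le>d. E r)"
    by (simp add: primitive_idempotents_sum)
  also have "\<dots> = (\<Sum>r\<le>d. msc (\<Sum>k\<le>d. c k * p k r) (E r))"
    by (simp add: matrix_sum_ldistrib bm_combination_mult_primitive)
  finally show ?thesis .
qed

lemma bm_combination_eq_msc_primitive_iff:
  assumes s: "s \<le> d"
  shows "(\<exists>\<alpha>. \<alpha> \<noteq> 0 \<and> (\<Sum>k\<le>d. msc (c k) (A k)) = msc \<alpha> (E s))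
    \<longleftrightarrow> (\<forall>r\<le>d. (\<Sum>k\<le>d. c k * p k r) \<noteq> 0 \<longleftrightarrow> r = s)"
proof
  assume "\<exists>\<alpha>. \<alpha> \<noteq> 0 \<and> (\<Sum>k\<le>d. msc (c k) (A k)) = msc \<alpha> (E s)"
  then obtain \<alpha> where "\<alpha> \<noteq> 0" and M: "(\<Sum>k\<le>d. msc (c k) (A k)) = msc \<alpha> (E s)"
    by blast
  have "(\<Sum>k\<le>d. c k * p k r) = (if r = s then \<alpha> else 0)" if r: "r \<le> d" for r
  proof -
    have "msc (\<Sum>k\<le>d. c k * p k r) (E r) = msc (if r = s then \<alpha> else 0) (E r)"
      using bm_combination_mult_primitive[OF r, of c] r s
      by (auto simp: M msc_matrix_mult primitive_idempotents_mult)
    then show ?thesis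
      using msc_cancel primitive_idempotents_nonzero r by blast
  qed
  then show "\<forall>r\<le>d. (\<Sum>k\<le>d. c k * p k r) \<noteq> 0 \<longleftrightarrow> r = s"
    using \<open>\<alpha> \<noteq> 0\<close> by auto
next
  assume eigenvalues: "\<forall>r\<le>d. (\<Sum>k\<le>d. c k * p k r) \<noteq> 0 \<longleftrightarrow> r = s"
  have "(\<Sum>k\<le>d. msc (c k) (A k)) = (\<Sum>r\<le>d. msc (\<Sum>k\<le>d. c k * p k r) (E r))"
    by (rule bm_combination_spectral_decomposition)
  also have "\<dots> = (\<Sum>r\<le>d. if r = s then msc (\<Sum>k\<le>d. c k * p k s) (E s) else 0)"
    using eigenvalues by (intro sum.cong) auto
  also have "\<dots> = msc (\<Sum>k\<le>d. c k * p k s) (E s)"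
    using s by simp
  finally show "\<exists>\<alpha>. \<alpha> \<noteq> 0 \<and> (\<Sum>k\<le>d. msc (c k) (A k)) = msc \<alpha> (E s)"
    using eigenvalues s by blast
qed

end

end

end

theorem mainTheorem2:
  fixes T :: "nat \<Rightarrow> complex^'e::finite^'c::finite"
    and A E :: "nat \<Rightarrow> complex^'e^'e"
    and p :: "nat \<Rightarrow> nat \<Rightarrow> complex"
    and t :: "nat \<Rightarrow> nat \<Rightarrow> nat \<Rightarrow> complex"
    and f :: "nat \<Rightarrow> nat \<Rightarrow> complex"
    and F :: "nat \<Rightarrow> complex^'e^'c"
    and g :: "nat \<Rightarrow> nat"
    and d l m s :: nat
  assumes scheme: "comm_assoc_scheme d A"
    and idem: "primitive_idempotents d A E"
    and eig: "\<And>k r. k \<le> d \<Longrightarrow> r \<le> d \<Longrightarrow> A k ** E r = msc (p k r) (E r)"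
    and tT: "\<And>i j. i \<in> {1..l} \<Longrightarrow> j \<in> {1..l} \<Longrightarrow>
               transpose (T i) ** T j = (\<Sum>k\<le>d. msc (t i j k) (A k))"
    and F_def: "\<And>j. j \<in> {1..m} \<Longrightarrow> F j = (\<Sum>i\<in>{1..l}. msc (f i j) (T i))"
    and s: "s \<le> d"
    and g: "\<And>j. j \<in> {1..m} \<Longrightarrow> g j \<in> {1..l}"
  shows "(\<forall>j\<in>{1..m}.
            (\<exists>\<alpha>. \<alpha> \<noteq> 0 \<and> transpose (T (g j)) ** F j = msc \<alpha> (E s)) \<and>
            (\<forall>h\<in>{1..l}. h < g j \<longrightarrow> transpose (T h) ** F j = 0))
     \<longleftrightarrow>
         (\<forall>j\<in>{1..m}.
            (\<forall>k\<le>d. \<forall>h\<in>{1..l}. h < g j \<longrightarrow> (\<Sum>i\<in>{1..l}. f i j * t h i k) = 0) \<and>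
            (\<forall>r\<le>d. (\<Sum>i\<in>{1..l}. \<Sum>k\<le>d. f i j * t (g j) i k * p k r) \<noteq> 0 \<longleftrightarrow> r = s))"
proof -
  have TF: "transpose (T h) ** F j = (\<Sum>k\<le>d. msc (\<Sum>i\<in>{1..l}. f i j * t h i k) (A k))"
    if "j \<in> {1..m}" "h \<in> {1..l}" for j h
    unfolding F_def[OF that(1)] by (rule matrix_mult_sum_msc_in_basis) (rule tT[OF that(2)])
  have eigenvalue_sum: "(\<Sum>i\<in>{1..l}. \<Sum>k\<le>d. f i j * t h i k * p k r)
      = (\<Sum>k\<le>d. (\<Sum>i\<in>{1..l}. f i j * t h i k) * p k r)" for j h r
    by (subst sum.swap) (simp add: sum_distrib_right)
  have "transpose (T h) ** F j = 0 \<longleftrightarrow> (\<forall>k\<le>d. (\<Sum>i\<in>{1..l}. f i j * t h i k) = 0)"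
    if "j \<in> {1..m}" "h \<in> {1..l}" for j h
    unfolding TF[OF that] by (rule bm_combination_eq_0_iff[OF scheme])
  moreover have "(\<exists>\<alpha>. \<alpha> \<noteq> 0 \<and> transpose (T (g j)) ** F j = msc \<alpha> (E s))
      \<longleftrightarrow> (\<forall>r\<le>d. (\<Sum>i\<in>{1..l}. \<Sum>k\<le>d. f i j * t (g j) i k * p k r) \<noteq> 0 \<longleftrightarrow> r = s)"
    if "j \<in> {1..m}" for j
    unfolding TF[OF that g[OF that]] eigenvalue_sum
    by (rule bm_combination_eq_msc_primitive_iff[OF scheme idem eig s])
  ultimately show ?thesis
    by auto
qed

end
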